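(* Let $G$ be an infinite locally finite graph, $D$ a finite connected graph, and $G'=G\square D$, where $G$ is identified with one of its copies $G\times\{x_0\}$ ($x_0\in V(D)$) in $G'$. Let $\alpha$ be an end of $G$ and $\alpha'$ the end of $G'$ with $\alpha\subseteq\alpha'$. Then $d(\alpha')=d(\alpha)\,|V(D)|$.
   Context: $\square$ denotes the Cartesian product. A ray is a one-way infinite path; two rays of a graph $H$ are equivalent in $H$ if for every finite $S\subseteq V(H)$ some component of $H-S$ contains tails of both; the classes are the ends of $H$. The degree $d(\alpha)$ of an end is the maximum number of pairwise vertex-disjoint rays in $\alpha$. *)

theory Defs
  imports Main "HOL-Library.Extended_Nat"
begin

definition graph :: "'a set \<Rightarrow> ('a \<Rightarrow> 'a \<Rightarrow> bool) \<Rightarrow> bool" where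
  "graph V E \<longleftrightarrow> (\<forall>x y. E x y \<longrightarrow> x \<in> V \<and> y \<in> V \<and> E y x \<and> x \<noteq> y)"

definition locally_finite :: "'a set \<Rightarrow> ('a \<Rightarrow> 'a \<Rightarrow> bool) \<Rightarrow> bool" where
  "locally_finite V E \<longleftrightarrow> (\<forall>x\<in>V. finite {y. E x y})"

definition conn_in :: "('a \<Rightarrow> 'a \<Rightarrow> bool) \<Rightarrow> 'a set \<Rightarrow> 'a \<Rightarrow> 'a \<Rightarrow> bool" where
  "conn_in E U x y \<longleftrightarrow> x \<in> U \<and> (\<lambda>a b. E a b \<and> a \<in> U \<and> b \<in> U)\<^sup>*\<^sup>* x y"

definition connected_graph :: "'a set \<Rightarrow> ('a \<Rightarrow> 'a \<Rightarrow> bool) \<Rightarrow> bool" where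
  "connected_graph V E \<longleftrightarrow> V \<noteq> {} \<and> (\<forall>x\<in>V. \<forall>y\<in>V. conn_in E V x y)"

definition ray :: "'a set \<Rightarrow> ('a \<Rightarrow> 'a \<Rightarrow> bool) \<Rightarrow> (nat \<Rightarrow> 'a) \<Rightarrow> bool" where
  "ray V E r \<longleftrightarrow> inj r \<and> (\<forall>i. r i \<in> V) \<and> (\<forall>i. E (r i) (r (Suc i)))"

definition ray_equiv :: "'a set \<Rightarrow> ('a \<Rightarrow> 'a \<Rightarrow> bool) \<Rightarrow> (nat \<Rightarrow> 'a) \<Rightarrow> (nat \<Rightarrow> 'a) \<Rightarrow> bool" where
  "ray_equiv V E r s \<longleftrightarrow>
     (\<forall>S. finite S \<and> S \<subseteq> V \<longrightarrow>
        (\<exists>n m. \<forall>i\<ge>n. \<forall>j\<ge>m. conn_in E (V - S) (r i) (s j)))"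

definition ends :: "'a set \<Rightarrow> ('a \<Rightarrow> 'a \<Rightarrow> bool) \<Rightarrow> (nat \<Rightarrow> 'a) set set" where
  "ends V E = {{s. ray V E s \<and> ray_equiv V E r s} | r. ray V E r}"

definition end_degree :: "(nat \<Rightarrow> 'a) set \<Rightarrow> enat" where
  "end_degree \<alpha> = (SUP R \<in> {R. finite R \<and> R \<subseteq> \<alpha> \<and>
        (\<forall>r\<in>R. \<forall>s\<in>R. r \<noteq> s \<longrightarrow> range r \<inter> range s = {})}. enat (card R))"

definition cart_V :: "'a set \<Rightarrow> 'b set \<Rightarrow> ('a \<times> 'b) set" where
  "cart_V VG VD = VG \<times> VD"

definition cart_E :: "('a \<Rightarrow> 'a \<Rightarrow> bool) \<Rightarrow> ('b \<Rightarrow> 'b \<Rightarrow> bool) \<Rightarrow> 'a \<times> 'b \<Rightarrow> 'a \<times> 'b \<Rightarrow> bool" where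
  "cart_E EG ED p q \<longleftrightarrow>
     (fst p = fst q \<and> ED (snd p) (snd q)) \<or> (snd p = snd q \<and> EG (fst p) (fst q))"

end

theory Submission
  imports Defs "HOL-Library.Disjoint_Sets" "HOL-Library.Sublist" "HOL-Library.FuncSet"
begin

text \<open>Lifting \<open>k\<close> disjoint rays of \<open>\<alpha>\<close> into all \<open>|V(D)|\<close> layers gives \<open>k |V(D)|\<close> disjoint
  rays of \<open>\<alpha>'\<close>. Conversely, take more than \<open>k |V(D)|\<close> disjoint rays of \<open>\<alpha>'\<close>. Their projections
  to \<open>G\<close> visit each vertex at most \<open>|V(D)|\<close> times, so every set of at most \<open>k\<close> vertices of
  \<open>G\<close> misses one of them completely. By Menger's theorem, applied in the finite balls of the
  locally finite graph \<open>H\<close> formed by the projected edges, there are \<open>k + 1\<close> disjoint paths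
  leaving any ball around the starting points; a Koenig-type compactness argument turns
  them into \<open>k + 1\<close> disjoint rays of \<open>H\<close>, and these belong to \<open>\<alpha>\<close>.\<close>

section \<open>Paths and separators\<close>

definition is_path :: "('a \<Rightarrow> 'a \<Rightarrow> bool) \<Rightarrow> 'a list \<Rightarrow> bool" where
  "is_path E p \<longleftrightarrow> p \<noteq> [] \<and> distinct p \<and> successively E p"

definition ab_path :: "('a \<Rightarrow> 'a \<Rightarrow> bool) \<Rightarrow> 'a set \<Rightarrow> 'a set \<Rightarrow> 'a list \<Rightarrow> bool" where
  "ab_path E A B p \<longleftrightarrow> is_path E p \<and> hd p \<in> A \<and> last p \<in> B"

definition separates :: "('a \<Rightarrow> 'a \<Rightarrow> bool) \<Rightarrow> 'a set \<Rightarrow> 'a set \<Rightarrow> 'a set \<Rightarrow> bool" where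
  "separates E A B T \<longleftrightarrow> (\<forall>p. ab_path E A B p \<longrightarrow> set p \<inter> T \<noteq> {})"

lemma is_path_mono: "is_path E p \<Longrightarrow> (\<And>u v. E u v \<Longrightarrow> E' u v) \<Longrightarrow> is_path E' p"
  unfolding is_path_def using successively_mono by blast

lemma ab_path_mono: "ab_path E A B p \<Longrightarrow> (\<And>u v. E u v \<Longrightarrow> E' u v) \<Longrightarrow> ab_path E' A B p"
  unfolding ab_path_def using is_path_mono by blast

lemma is_path_prefix: "is_path E p \<Longrightarrow> prefix q p \<Longrightarrow> q \<noteq> [] \<Longrightarrow> is_path E q"
  unfolding is_path_def prefix_def by (auto simp: successively_append_iff)

lemma is_path_suffix: "is_path E p \<Longrightarrow> suffix q p \<Longrightarrow> q \<noteq> [] \<Longrightarrow> is_path E q"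
  unfolding is_path_def suffix_def by (auto simp: successively_append_iff)

lemma is_path_append:
  "is_path E p \<Longrightarrow> is_path E q \<Longrightarrow> set p \<inter> set q = {} \<Longrightarrow> E (last p) (hd q) \<Longrightarrow> is_path E (p @ q)"
  unfolding is_path_def by (auto simp: successively_append_iff)

lemma is_path_append_tl:
  assumes "is_path E p" "is_path E q" "hd q = last p" "set p \<inter> set (tl q) = {}"
  shows "is_path E (p @ tl q)"
proof -
  obtain q' where "q = last p # q'" using assms(2,3) unfolding is_path_def by (metis list.collapse)
  then show ?thesis using assms unfolding is_path_def
    by (cases q') (auto simp: successively_append_iff)
qed

lemma inj_on_hd_disjoint_paths: "disjoint_family_on set P \<Longrightarrow> [] \<notin> P \<Longrightarrow> inj_on hd P"
  unfolding disjoint_family_on_def inj_on_def by (metis disjoint_iff list.set_sel(1))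

lemma inj_on_last_disjoint_paths: "disjoint_family_on set P \<Longrightarrow> [] \<notin> P \<Longrightarrow> inj_on last P"
  unfolding disjoint_family_on_def inj_on_def by (metis disjoint_iff last_in_set)

lemma set_eq_insert_last_butlast: "xs \<noteq> [] \<Longrightarrow> set xs = insert (last xs) (set (butlast xs))"
  by (induction xs) auto

lemma walk_contains_path:
  "successively (\<lambda>a b. a = b \<or> E a b) w \<Longrightarrow> w \<noteq> [] \<Longrightarrow>
   \<exists>p. is_path E p \<and> hd p = hd w \<and> last p = last w \<and> set p \<subseteq> set w"
proof (induction "length w" arbitrary: w rule: less_induct)
  case less
  show ?case
  proof (cases "distinct w")
    case True
    then have "successively E w"
      using less.prems(1) by (induction w rule: induct_list012) auto
    then show ?thesis using True less.prems(2) unfolding is_path_def by blast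
  next
    case False
    then obtain xs y ys zs where w: "w = xs @ [y] @ ys @ [y] @ zs"
      using not_distinct_decomp by blast
    let ?w = "xs @ [y] @ zs"
    have "successively (\<lambda>a b. a = b \<or> E a b) ?w"
      using less.prems(1) unfolding w
      by (auto simp: successively_append_iff successively_Cons split: if_splits)
    then obtain p where "is_path E p" "hd p = hd ?w" "last p = last ?w" "set p \<subseteq> set ?w"
      using less.hyps[of ?w] unfolding w by auto
    moreover have "hd ?w = hd w" "last ?w = last w" "set ?w \<subseteq> set w"
      unfolding w by (cases xs; cases zs; auto)+
    ultimately show ?thesis by auto
  qed
qed

lemma separates_walk:
  assumes "separates E A B T" "successively (\<lambda>a b. a = b \<or> E a b) w" "w \<noteq> []"
    "hd w \<in> A" "last w \<in> B"
  shows "set w \<inter> T \<noteq> {}"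
proof -
  obtain p where "is_path E p" "hd p = hd w" "last p = last w" "set p \<subseteq> set w"
    using walk_contains_path[OF assms(2,3)] by blast
  then have "set p \<inter> T \<noteq> {}" using assms(1,4,5) unfolding separates_def ab_path_def by auto
  with \<open>set p \<subseteq> set w\<close> show ?thesis by blast
qed

fun prefix_to_first :: "'a set \<Rightarrow> 'a list \<Rightarrow> 'a list" where
  "prefix_to_first X [] = []"
| "prefix_to_first X (v # vs) = (if v \<in> X then [v] else v # prefix_to_first X vs)"

fun suffix_from_last :: "'a set \<Rightarrow> 'a list \<Rightarrow> 'a list" where
  "suffix_from_last X [] = []"
| "suffix_from_last X (v # vs) = (if set vs \<inter> X \<noteq> {} then suffix_from_last X vs else v # vs)"

lemma prefix_prefix_to_first: "prefix (prefix_to_first X p) p"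
  by (induction p) auto

lemma prefix_to_first_eq_Nil_iff [simp]: "prefix_to_first X p = [] \<longleftrightarrow> p = []"
  by (cases p) auto

lemma hd_prefix_to_first: "p \<noteq> [] \<Longrightarrow> hd (prefix_to_first X p) = hd p"
  by (cases p) auto

lemma last_prefix_to_first: "set p \<inter> X \<noteq> {} \<Longrightarrow> last (prefix_to_first X p) \<in> X"
  by (induction p) auto

lemma butlast_prefix_to_first: "set (butlast (prefix_to_first X p)) \<inter> X = {}"
  by (induction p) auto

lemma prefix_to_first_prefix_to_first:
  "Y \<subseteq> X \<Longrightarrow> prefix_to_first X (prefix_to_first Y p) = prefix_to_first X p"
  by (induction p) auto

lemma suffix_suffix_from_last: "suffix (suffix_from_last X p) p"
  by (induction p) (auto intro: suffix_ConsI)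

lemma hd_suffix_from_last: "set p \<inter> X \<noteq> {} \<Longrightarrow> hd (suffix_from_last X p) \<in> X"
  by (induction p) auto

lemma suffix_from_last_neq_Nil: "set p \<inter> X \<noteq> {} \<Longrightarrow> suffix_from_last X p \<noteq> []"
  by (induction p) auto

lemma last_suffix_from_last: "set p \<inter> X \<noteq> {} \<Longrightarrow> last (suffix_from_last X p) = last p"
  by (induction p) (auto simp: suffix_from_last_neq_Nil)

lemma tl_suffix_from_last: "set (tl (suffix_from_last X p)) \<inter> X = {}"
  by (induction p) auto

lemma ab_path_prefix_to_first:
  assumes "is_path E p" "hd p \<in> A" "set p \<inter> X \<noteq> {}"
  shows "ab_path E A X (prefix_to_first X p) \<and> set (butlast (prefix_to_first X p)) \<inter> X = {}"
  using assms is_path_prefix[OF assms(1) prefix_prefix_to_first]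
  by (auto simp: ab_path_def is_path_def hd_prefix_to_first last_prefix_to_first
      butlast_prefix_to_first)

lemma ab_path_suffix_from_last:
  assumes "is_path E p" "last p \<in> B" "set p \<inter> X \<noteq> {}"
  shows "ab_path E X B (suffix_from_last X p) \<and> set (tl (suffix_from_last X p)) \<inter> X = {}"
  using assms suffix_from_last_neq_Nil[OF assms(3)] is_path_suffix[OF assms(1) suffix_suffix_from_last]
  by (auto simp: ab_path_def hd_suffix_from_last last_suffix_from_last tl_suffix_from_last)

lemma disjoint_family_on_set_image:
  assumes "disjoint_family_on set P" "\<And>p. p \<in> P \<Longrightarrow> set (f p) \<subseteq> set p"
  shows "disjoint_family_on set (f ` P)"
  unfolding disjoint_family_on_def
proof (intro ballI impI)
  fix a b assume "a \<in> f ` P" "b \<in> f ` P" "a \<noteq> b"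
  then obtain p q where "p \<in> P" "q \<in> P" "a = f p" "b = f q" "p \<noteq> q" by blast
  then show "set a \<inter> set b = {}" using assms unfolding disjoint_family_on_def by blast
qed

lemma disjoint_paths_trim_end:
  assumes "finite P" "disjoint_family_on set P" "\<forall>p\<in>P. ab_path E A X p"
  shows "\<exists>P'. finite P' \<and> card P' = card P \<and> disjoint_family_on set P' \<and>
    (\<forall>p\<in>P'. ab_path E A X p \<and> set (butlast p) \<inter> X = {})"
proof (intro exI[of _ "prefix_to_first X ` P"] conjI)
  let ?P' = "prefix_to_first X ` P"
  have "[] \<notin> P" using assms(3) unfolding ab_path_def is_path_def by auto
  then have "(hd \<circ> prefix_to_first X) p = hd p" if "p \<in> P" for p
    using that by (metis comp_apply hd_prefix_to_first)
  then have "inj_on (hd \<circ> prefix_to_first X) P"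
    using inj_on_cong inj_on_hd_disjoint_paths[OF assms(2) \<open>[] \<notin> P\<close>] by metis
  then show "card ?P' = card P" using card_image inj_on_imageI2 by blast
  show "disjoint_family_on set ?P'"
    using disjoint_family_on_set_image[OF assms(2)] set_mono_prefix[OF prefix_prefix_to_first] .
  show "\<forall>p\<in>?P'. ab_path E A X p \<and> set (butlast p) \<inter> X = {}"
  proof
    fix p' assume "p' \<in> ?P'"
    then obtain p where p: "p \<in> P" "p' = prefix_to_first X p" by blast
    then have "is_path E p" "hd p \<in> A" "last p \<in> X" using assms(3) unfolding ab_path_def by auto
    moreover have "set p \<inter> X \<noteq> {}"
      using calculation last_in_set unfolding is_path_def by blast
    ultimately
    show "ab_path E A X p' \<and> set (butlast p') \<inter> X = {}"
      using ab_path_prefix_to_first p(2) by blast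
  qed
qed (use assms(1) in simp)

lemma disjoint_paths_trim_start:
  assumes "finite Q" "disjoint_family_on set Q" "\<forall>q\<in>Q. ab_path E X B q"
  shows "\<exists>Q'. finite Q' \<and> card Q' = card Q \<and> disjoint_family_on set Q' \<and>
    (\<forall>q\<in>Q'. ab_path E X B q \<and> set (tl q) \<inter> X = {})"
proof (intro exI[of _ "suffix_from_last X ` Q"] conjI)
  let ?Q' = "suffix_from_last X ` Q"
  have meet: "set q \<inter> X \<noteq> {}" if "q \<in> Q" for q
    using assms(3) that unfolding ab_path_def is_path_def by (auto intro: hd_in_set)
  have "[] \<notin> Q" using assms(3) unfolding ab_path_def is_path_def by auto
  have "(last \<circ> suffix_from_last X) q = last q" if "q \<in> Q" for q
    using last_suffix_from_last[OF meet[OF that]] by simp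
  then have "inj_on (last \<circ> suffix_from_last X) Q"
    using inj_on_cong inj_on_last_disjoint_paths[OF assms(2) \<open>[] \<notin> Q\<close>] by metis
  then show "card ?Q' = card Q" using card_image inj_on_imageI2 by blast
  show "disjoint_family_on set ?Q'"
    using disjoint_family_on_set_image[OF assms(2)] set_mono_suffix[OF suffix_suffix_from_last] .
  show "\<forall>q\<in>?Q'. ab_path E X B q \<and> set (tl q) \<inter> X = {}"
  proof
    fix q' assume "q' \<in> ?Q'"
    then obtain q where q: "q \<in> Q" "q' = suffix_from_last X q" by blast
    then have "is_path E q" "last q \<in> B" using assms(3) unfolding ab_path_def by auto
    from ab_path_suffix_from_last[OF this meet[OF q(1)]]
    show "ab_path E X B q' \<and> set (tl q') \<inter> X = {}" using q(2) by simp
  qed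
qed (use assms(1) in simp)

section \<open>Menger's theorem\<close>

definition delete_edge :: "('a \<Rightarrow> 'a \<Rightarrow> bool) \<Rightarrow> 'a \<Rightarrow> 'a \<Rightarrow> 'a \<Rightarrow> 'a \<Rightarrow> bool" where
  "delete_edge E y x u v \<longleftrightarrow> E u v \<and> (u, v) \<noteq> (y, x)"

lemma successively_delete_edge:
  "successively E p \<Longrightarrow> \<not> successively (delete_edge E y x) p \<Longrightarrow> \<exists>l1 l2. p = l1 @ y # x # l2"
proof (induction p rule: induct_list012)
  case (3 a b zs)
  show ?case
  proof (cases "(a, b) = (y, x)")
    case True
    then show ?thesis by (intro exI[of _ "[]"] exI[of _ zs]) simp
  next
    case False
    have "successively E (b # zs)" using "3.prems"(1) by simp
    moreover have "\<not> successively (delete_edge E y x) (b # zs)"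
      using "3.prems" False by (auto simp: delete_edge_def)
    ultimately obtain l1 l2 where "b # zs = l1 @ y # x # l2" using "3.IH"(2) by blast
    then show ?thesis by (intro exI[of _ "a # l1"] exI[of _ l2]) simp
  qed
qed simp_all

lemma separates_delete_edge:
  assumes "separates (delete_edge E y x) A B S"
  shows "separates E A B (insert y S)" "separates E A B (insert x S)"
proof -
  have hit: "set p \<inter> S \<noteq> {} \<or> y \<in> set p \<and> x \<in> set p" if p: "ab_path E A B p" for p
  proof (cases "successively (delete_edge E y x) p")
    case True
    with p have "ab_path (delete_edge E y x) A B p" unfolding ab_path_def is_path_def by blast
    then show ?thesis using assms unfolding separates_def by blast
  next
    case False
    have "successively E p" using p unfolding ab_path_def is_path_def by blast
    from successively_delete_edge[OF this False] obtain l1 l2 where "p = l1 @ y # x # l2"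
      by blast
    then show ?thesis by auto
  qed
  show "separates E A B (insert y S)" "separates E A B (insert x S)"
    unfolding separates_def using hit by fastforce+
qed

text \<open>A path can use the edge \<open>y x\<close> only after visiting \<open>y\<close> and only before its last visit
  to \<open>x\<close>; so its prefix up to \<open>insert y S\<close> and its suffix from \<open>insert x S\<close> avoid the edge.\<close>

lemma separates_via_prefix:
  assumes X: "separates E A B (insert y S)"
    and T: "separates (delete_edge E y x) A (insert y S) T"
  shows "separates E A B T"
  unfolding separates_def
proof (intro allI impI)
  fix p assume p: "ab_path E A B p"
  let ?X = "insert y S"
  let ?p = "prefix_to_first ?X p"
  have meet: "set p \<inter> ?X \<noteq> {}" using X p unfolding separates_def by blast
  have "is_path E p" "hd p \<in> A" using p unfolding ab_path_def by auto
  from ab_path_prefix_to_first[OF this meet]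
  have p': "ab_path E A ?X ?p" "set (butlast ?p) \<inter> ?X = {}" by auto
  have "successively (delete_edge E y x) ?p"
  proof (rule ccontr)
    assume "\<not> ?thesis"
    moreover have "successively E ?p" using p'(1) unfolding ab_path_def is_path_def by blast
    ultimately obtain l1 l2 where "?p = l1 @ y # x # l2"
      using successively_delete_edge by metis
    moreover have "y \<in> set (butlast (l1 @ y # x # l2))" by (simp add: butlast_append)
    ultimately show False using p'(2) by simp
  qed
  with p'(1) have "ab_path (delete_edge E y x) A ?X ?p" unfolding ab_path_def is_path_def by blast
  then have "set ?p \<inter> T \<noteq> {}" using T unfolding separates_def by blast
  moreover have "set ?p \<subseteq> set p" by (rule set_mono_prefix[OF prefix_prefix_to_first])
  ultimately show "set p \<inter> T \<noteq> {}" by blast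
qed

lemma separates_via_suffix:
  assumes X: "separates E A B (insert x S)"
    and T: "separates (delete_edge E y x) (insert x S) B T"
  shows "separates E A B T"
  unfolding separates_def
proof (intro allI impI)
  fix p assume p: "ab_path E A B p"
  let ?X = "insert x S"
  let ?p = "suffix_from_last ?X p"
  have meet: "set p \<inter> ?X \<noteq> {}" using X p unfolding separates_def by blast
  have "is_path E p" "last p \<in> B" using p unfolding ab_path_def by auto
  from ab_path_suffix_from_last[OF this meet]
  have p': "ab_path E ?X B ?p" "set (tl ?p) \<inter> ?X = {}" by auto
  have "successively (delete_edge E y x) ?p"
  proof (rule ccontr)
    assume "\<not> ?thesis"
    moreover have "successively E ?p" using p'(1) unfolding ab_path_def is_path_def by blast
    ultimately obtain l1 l2 where "?p = l1 @ y # x # l2"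
      using successively_delete_edge by metis
    moreover have "x \<in> set (tl (l1 @ y # x # l2))" by (cases l1) auto
    ultimately show False using p'(2) by simp
  qed
  with p'(1) have "ab_path (delete_edge E y x) ?X B ?p" unfolding ab_path_def is_path_def by blast
  then have "set ?p \<inter> T \<noteq> {}" using T unfolding separates_def by blast
  moreover have "set ?p \<subseteq> set p" by (rule set_mono_suffix[OF suffix_suffix_from_last])
  ultimately show "set p \<inter> T \<noteq> {}" by blast
qed

lemma separator_meets_at_ends:
  assumes S: "separates E A B S"
    and p: "ab_path E A X p" "set (butlast p) \<inter> X = {}"
    and q: "ab_path E Y B q" "set (tl q) \<inter> Y = {}"
    and "S \<subseteq> X" "S \<subseteq> Y" "z \<in> set p" "z \<in> set q"
  shows "z = last p \<and> z = hd q \<and> z \<in> S"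
proof -
  obtain p1 p2 where p12: "p = p1 @ z # p2" using split_list[OF \<open>z \<in> set p\<close>] by blast
  obtain q1 q2 where q12: "q = q1 @ z # q2" using split_list[OF \<open>z \<in> set q\<close>] by blast
  let ?w = "p1 @ z # q2"
  have "successively E (p1 @ [z])" "successively E (z # q2)"
    using p(1) q(1) unfolding p12 q12 ab_path_def is_path_def
    by (auto simp: successively_append_iff)
  then have "successively E ?w"
    by (auto simp: successively_append_iff successively_Cons)
  then have walk: "successively (\<lambda>a b. a = b \<or> E a b) ?w" by (rule successively_mono) simp
  have "hd ?w = hd p" unfolding p12 by (cases p1) auto
  moreover have "last ?w = last q" unfolding q12 by (cases q2) auto
  ultimately have "set ?w \<inter> S \<noteq> {}"
    using separates_walk[OF S walk] p(1) q(1) unfolding ab_path_def by simp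
  then obtain s where s: "s \<in> S" "s \<in> set ?w" by blast
  have "set p1 \<subseteq> set (butlast p)" unfolding p12 by (simp add: butlast_append)
  moreover have "set q2 \<subseteq> set (tl q)" unfolding q12 by (cases q1) auto
  ultimately have "s \<notin> set p1" "s \<notin> set q2"
    using s(1) p(2) q(2) \<open>S \<subseteq> X\<close> \<open>S \<subseteq> Y\<close> by auto
  with s have "z \<in> S" by auto
  then have "z \<notin> set (butlast p)" "z \<notin> set (tl q)"
    using p(2) q(2) \<open>S \<subseteq> X\<close> \<open>S \<subseteq> Y\<close> by auto
  moreover have "set p = insert (last p) (set (butlast p))"
    using \<open>z \<in> set p\<close> by (intro set_eq_insert_last_butlast) auto
  moreover have "set q = insert (hd q) (set (tl q))"
    using \<open>z \<in> set q\<close> by (cases q) auto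
  ultimately show ?thesis using \<open>z \<in> S\<close> \<open>z \<in> set p\<close> \<open>z \<in> set q\<close> by blast
qed

definition path_join :: "'a list \<Rightarrow> 'a list \<Rightarrow> 'a list" where
  "path_join p q = (if last p = hd q then p @ tl q else p @ q)"

lemma set_path_join: "set (path_join p q) \<subseteq> set p \<union> set q"
  unfolding path_join_def by (cases q) auto

lemma ab_path_join:
  assumes E': "\<And>u v. E' u v \<Longrightarrow> E u v" and S: "separates E' A B S"
    and p: "ab_path E' A X p" "set (butlast p) \<inter> X = {}" and "S \<subseteq> X"
    and q: "ab_path E' Y B q" "set (tl q) \<inter> Y = {}" and "S \<subseteq> Y"
    and link: "last p = hd q \<and> hd q \<in> S \<or> last p \<notin> S \<and> E (last p) (hd q)"
  shows "ab_path E A B (path_join p q)"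
proof -
  have meet: "z = last p \<and> z = hd q \<and> z \<in> S" if "z \<in> set p" "z \<in> set q" for z
    using separator_meets_at_ends[OF S p q \<open>S \<subseteq> X\<close> \<open>S \<subseteq> Y\<close> that] .
  have pE: "is_path E p" and qE: "is_path E q"
    using p(1) q(1) unfolding ab_path_def by (auto intro: is_path_mono E')
  obtain q' where q': "q = hd q # q'"
    using q(1) unfolding ab_path_def is_path_def by (metis list.collapse)
  have "hd (path_join p q) = hd p"
    using p(1) unfolding path_join_def ab_path_def is_path_def by simp
  moreover have "is_path E (path_join p q) \<and> last (path_join p q) = last q"
    using link
  proof
    assume shared: "last p = hd q \<and> hd q \<in> S"
    have "hd q \<notin> set q'" using q(1) q' unfolding ab_path_def is_path_def by (metis distinct.simps(2))
    then have "set p \<inter> set (tl q) = {}" using meet q' by (metis disjoint_iff list.sel(3) list.set_intros(2))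
    then have "is_path E (p @ tl q)" using is_path_append_tl[OF pE qE] shared by simp
    moreover have "last (p @ q') = last (hd q # q')"
      using shared p(1) unfolding ab_path_def is_path_def by (cases q') auto
    then have "last (p @ tl q) = last q" using q' by (metis list.sel(3))
    ultimately show ?thesis using shared unfolding path_join_def by simp
  next
    assume edge: "last p \<notin> S \<and> E (last p) (hd q)"
    then have disjoint: "set p \<inter> set q = {}" using meet by blast
    then have "last p \<noteq> hd q" using p(1) q' unfolding ab_path_def is_path_def
      by (metis disjoint_iff last_in_set list.set_intros(1))
    moreover have "is_path E (p @ q)" using is_path_append[OF pE qE disjoint] edge by simp
    moreover have "last (p @ q) = last q" using q' by (metis last_appendR list.discI)
    ultimately show ?thesis unfolding path_join_def by simp
  qed
  ultimately show ?thesis using p(1) q(1) unfolding ab_path_def by simp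
qed

lemma hd_image_disjoint_paths:
  assumes "finite X" "card Q = card X" "disjoint_family_on set Q" "[] \<notin> Q" "hd ` Q \<subseteq> X"
  shows "hd ` Q = X"
  using card_subset_eq[OF assms(1,5)] card_image[OF inj_on_hd_disjoint_paths[OF assms(3,4)]]
    assms(2) by simp

lemma join_disjoint_paths:
  assumes E': "\<And>u v. E' u v \<Longrightarrow> E u v" and S: "separates E' A B S"
    and yx: "E y x" "y \<notin> S" "x \<notin> S"
    and P: "finite P" "disjoint_family_on set P"
      "\<forall>p\<in>P. ab_path E' A (insert y S) p \<and> set (butlast p) \<inter> insert y S = {}"
    and Q: "finite S" "card Q = card (insert x S)" "disjoint_family_on set Q"
      "\<forall>q\<in>Q. ab_path E' (insert x S) B q \<and> set (tl q) \<inter> insert x S = {}"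
  shows "\<exists>R. finite R \<and> card R = card P \<and> disjoint_family_on set R \<and> (\<forall>r\<in>R. ab_path E A B r)"
proof -
  have "[] \<notin> P" "[] \<notin> Q" using P(3) Q(4) unfolding ab_path_def is_path_def by auto
  have "hd ` Q \<subseteq> insert x S" using Q(4) unfolding ab_path_def by auto
  from hd_image_disjoint_paths[OF _ Q(2,3) \<open>[] \<notin> Q\<close> this]
  have hd_Q: "hd ` Q = insert x S" using Q(1) by blast
  \<comment> \<open>a path ending in \<open>S\<close> is continued by the path of \<open>Q\<close> starting there, one ending at \<open>y\<close>
    by the path starting at \<open>x\<close>, across the deleted edge\<close>
  define partner where "partner v = (if v = y then x else v)" for v
  define mate where "mate p = inv_into Q hd (partner (last p))" for p
  have last_P: "last p \<in> insert y S" if "p \<in> P" for p using P(3) that unfolding ab_path_def by blast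
  then have "partner (last p) \<in> hd ` Q" if "p \<in> P" for p
    using hd_Q that unfolding partner_def by auto
  then have mate: "mate p \<in> Q" "hd (mate p) = partner (last p)" if "p \<in> P" for p
    unfolding mate_def using that by (simp_all add: inv_into_into f_inv_into_f)
  have meet: "z = last p \<and> z = hd (mate p') \<and> z \<in> S"
    if "p \<in> P" "p' \<in> P" "z \<in> set p" "z \<in> set (mate p')" for p p' z
    using separator_meets_at_ends[OF S _ _ _ _ _ _ that(3,4)] P(3) Q(4) that(1) mate[OF that(2)]
    by blast
  have partner_inj: "partner v = partner w \<Longrightarrow> v \<in> insert y S \<Longrightarrow> w \<in> insert y S \<Longrightarrow> v = w" for v w
    using yx unfolding partner_def by (auto split: if_splits)
  have last_inj: "inj_on last P" by (rule inj_on_last_disjoint_paths[OF P(2) \<open>[] \<notin> P\<close>])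
  let ?join = "\<lambda>p. path_join p (mate p)"
  have "ab_path E A B (?join p)" if "p \<in> P" for p
  proof (rule ab_path_join[OF E' S])
    show "last p = hd (mate p) \<and> hd (mate p) \<in> S \<or> last p \<notin> S \<and> E (last p) (hd (mate p))"
      using last_P[OF that] mate[OF that] yx unfolding partner_def by auto
  qed (use P(3) Q(4) that mate[OF that] in auto)
  moreover have "set (?join p) \<inter> set (?join p') = {}" if "p \<in> P" "p' \<in> P" "p \<noteq> p'" for p p'
  proof -
    have "last p \<noteq> last p'" using last_inj that unfolding inj_on_def by blast
    then have "hd (mate p) \<noteq> hd (mate p')" using mate that partner_inj last_P by metis
    then have "set (mate p) \<inter> set (mate p') = {}"
      using Q(3) mate that unfolding disjoint_family_on_def by metis
    moreover have "set p \<inter> set (mate p') = {}" "set p' \<inter> set (mate p) = {}"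
      using meet that \<open>last p \<noteq> last p'\<close> mate yx(3) unfolding partner_def
      by (metis disjoint_iff)+
    moreover have "set p \<inter> set p' = {}" using P(2) that unfolding disjoint_family_on_def by blast
    ultimately show ?thesis using set_path_join[of p "mate p"] set_path_join[of p' "mate p'"] by blast
  qed
  moreover have "?join p \<noteq> []" if "p \<in> P" for p
    using that \<open>[] \<notin> P\<close> unfolding path_join_def by auto
  ultimately have "inj_on ?join P" "disjoint_family_on set (?join ` P)"
    unfolding inj_on_def disjoint_family_on_def by (metis disjoint_iff list.set_sel(1), blast)
  then show ?thesis using P(1) card_image \<open>\<And>p. p \<in> P \<Longrightarrow> ab_path E A B (?join p)\<close>
    by (intro exI[of _ "?join ` P"]) auto
qed

lemma menger_no_edges:
  assumes "\<And>u v. \<not> E u v" "finite A" "\<And>T. finite T \<Longrightarrow> separates E A B T \<Longrightarrow> k \<le> card T"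
  shows "\<exists>P. finite P \<and> card P = k \<and> disjoint_family_on set P \<and> (\<forall>p\<in>P. ab_path E A B p)"
proof -
  have "p = [hd p]" if "is_path E p" for p
    using that assms(1) unfolding is_path_def by (cases p; cases "tl p") auto
  then have "separates E A B (A \<inter> B)" unfolding separates_def ab_path_def
    by (metis IntI disjoint_iff last.simps list.set_intros(1))
  then have "k \<le> card (A \<inter> B)" using assms(2,3) by simp
  then obtain C where C: "C \<subseteq> A \<inter> B" "card C = k" by (meson obtain_subset_with_card_n)
  then have "finite C" using assms(2) finite_subset by blast
  show ?thesis
  proof (intro exI conjI)
    show "card ((\<lambda>a. [a]) ` C) = k" using C(2) by (simp add: card_image inj_on_def)
    show "disjoint_family_on set ((\<lambda>a. [a]) ` C)" unfolding disjoint_family_on_def by auto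
    show "\<forall>p\<in>(\<lambda>a. [a]) ` C. ab_path E A B p"
      using C(1) unfolding ab_path_def is_path_def by auto
  qed (use \<open>finite C\<close> in simp)
qed

text \<open>If deleting the edge \<open>y x\<close> creates a separator \<open>S\<close> with fewer than \<open>k\<close> vertices, then
  \<open>insert y S\<close> and \<open>insert x S\<close> are separators of size \<open>k\<close>: route \<open>k\<close> disjoint paths into the
  first and \<open>k\<close> out of the second, and glue them at \<open>S\<close> and along \<open>y x\<close>.\<close>

lemma menger_small_separator:
  fixes E :: "'a \<Rightarrow> 'a \<Rightarrow> bool" and y x :: 'a
  defines "E' \<equiv> delete_edge E y x"
  assumes IH: "\<And>A B k. finite A \<Longrightarrow> (\<And>T. finite T \<Longrightarrow> separates E' A B T \<Longrightarrow> k \<le> card T) \<Longrightarrow>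
      \<exists>P. finite P \<and> card P = k \<and> disjoint_family_on set P \<and> (\<forall>p\<in>P. ab_path E' A B p)"
    and yx: "E y x" and "finite A" and large: "\<And>T. finite T \<Longrightarrow> separates E A B T \<Longrightarrow> k \<le> card T"
    and S: "finite S" "separates E' A B S" "card S < k"
  shows "\<exists>P. finite P \<and> card P = k \<and> disjoint_family_on set P \<and> (\<forall>p\<in>P. ab_path E A B p)"
proof -
  have E'E: "\<And>u v. E' u v \<Longrightarrow> E u v" unfolding E'_def delete_edge_def by auto
  note XY = separates_delete_edge[OF S(2)[unfolded E'_def]]
  then have "k \<le> card (insert y S)" "k \<le> card (insert x S)" using large S(1) by simp_all
  then have yS: "y \<notin> S" "card (insert y S) = k" and xS: "x \<notin> S" "card (insert x S) = k"
    using S(1,3) by (auto simp: card_insert_if split: if_splits)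
  obtain P where "finite P" "card P = k" "disjoint_family_on set P"
      "\<forall>p\<in>P. ab_path E' A (insert y S) p"
    using IH[OF \<open>finite A\<close>] separates_via_prefix[OF XY(1)] large unfolding E'_def by blast
  then obtain P' where P': "finite P'" "card P' = k" "disjoint_family_on set P'"
      "\<forall>p\<in>P'. ab_path E' A (insert y S) p \<and> set (butlast p) \<inter> insert y S = {}"
    using disjoint_paths_trim_end by metis
  obtain Q where "finite Q" "card Q = k" "disjoint_family_on set Q"
      "\<forall>q\<in>Q. ab_path E' (insert x S) B q"
    using IH[of "insert x S"] separates_via_suffix[OF XY(2)] large S(1) unfolding E'_def by blast
  then obtain Q' where Q': "finite Q'" "card Q' = k" "disjoint_family_on set Q'"
      "\<forall>q\<in>Q'. ab_path E' (insert x S) B q \<and> set (tl q) \<inter> insert x S = {}"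
    using disjoint_paths_trim_start by metis
  have "card Q' = card (insert x S)" using Q'(2) xS(2) by simp
  from join_disjoint_paths[where E' = E' and E = E and P = P' and Q = Q',
      OF E'E S(2) yx yS(1) xS(1) P'(1,3,4) S(1) this Q'(3,4)]
  show ?thesis using P'(2) by simp
qed

theorem menger:
  assumes "finite {(u, v). E u v}" "\<And>v. \<not> E v v" "finite A"
    and "\<And>T. finite T \<Longrightarrow> separates E A B T \<Longrightarrow> k \<le> card T"
  shows "\<exists>P. finite P \<and> card P = k \<and> disjoint_family_on set P \<and> (\<forall>p\<in>P. ab_path E A B p)"
  using assms
proof (induction "card {(u, v). E u v}" arbitrary: E A B k rule: less_induct)
  case less
  show ?case
  proof (cases "\<exists>u v. E u v")
    case False
    then have "\<And>u v. \<not> E u v" by blast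
    from menger_no_edges[OF this less.prems(3,4)] show ?thesis .
  next
    case True
    then obtain y x where yx: "E y x" by blast
    let ?E' = "delete_edge E y x"
    have edges: "{(u, v). ?E' u v} = {(u, v). E u v} - {(y, x)}" unfolding delete_edge_def by auto
    then have fin: "finite {(u, v). ?E' u v}" using less.prems(1) by simp
    have smaller: "card {(u, v). ?E' u v} < card {(u, v). E u v}"
      unfolding edges using card_Diff1_less[OF less.prems(1), of "(y, x)"] yx by blast
    have irrefl: "\<And>v. \<not> ?E' v v" and E'E: "\<And>u v. ?E' u v \<Longrightarrow> E u v"
      using less.prems(2) unfolding delete_edge_def by auto
    note IH = less.hyps[OF smaller fin irrefl]
    show ?thesis
    proof (cases "\<forall>T. finite T \<longrightarrow> separates ?E' A B T \<longrightarrow> k \<le> card T")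
      case True
      then have "\<And>T. finite T \<Longrightarrow> separates ?E' A B T \<Longrightarrow> k \<le> card T" by blast
      from IH[OF less.prems(3) this] obtain P where
        P: "finite P" "card P = k" "disjoint_family_on set P" "\<forall>p\<in>P. ab_path ?E' A B p"
        by blast
      have "\<forall>p\<in>P. ab_path E A B p"
      proof
        fix p assume "p \<in> P"
        with P(4) have "ab_path ?E' A B p" by blast
        from ab_path_mono[OF this E'E] show "ab_path E A B p" .
      qed
      with P(1-3) show ?thesis by blast
    next
      case False
      then obtain S where "finite S" "separates ?E' A B S" "card S < k"
        unfolding not_all not_imp not_le by blast
      from menger_small_separator[OF IH yx less.prems(3,4) this] show ?thesis .
    qed
  qed
qed

section \<open>Rays as limits of paths\<close>

lemma koenig_diagonal:
  fixes f :: "nat \<Rightarrow> nat \<Rightarrow> 'b"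
  assumes M: "\<And>i. finite (M i)" and f: "\<And>i j. i \<le> j \<Longrightarrow> f i j \<in> M i"
  shows "\<exists>c. \<forall>i. \<exists>j\<ge>i. \<forall>i'\<le>i. f i' j = c i'"
proof -
  have step: "\<exists>c. infinite {j\<in>X. f i j = c}" if X: "infinite X" for X i
  proof -
    have "infinite (X - {..<i})" using X by (simp add: Diff_infinite_finite)
    moreover have "X - {..<i} = {j\<in>X. i \<le> j}" by auto
    moreover have "f i ` {j\<in>X. i \<le> j} \<subseteq> M i" using f by blast
    then have "finite (f i ` {j\<in>X. i \<le> j})" using M by (rule finite_subset)
    ultimately obtain c where "infinite (f i -` {c} \<inter> {j\<in>X. i \<le> j})"
      using inf_img_fin_dom' by metis
    then have "infinite {j\<in>X. f i j = c}" by (rule infinite_super[rotated]) auto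
    then show ?thesis ..
  qed
  have val: "infinite {j\<in>X. f i j = (SOME c. infinite {j\<in>X. f i j = c})}" if "infinite X" for X i
    using someI_ex[OF step[OF that]] .
  \<comment> \<open>\<open>J i\<close>: the infinitely many indices agreeing with \<open>c\<close> on all coordinates below \<open>i\<close>\<close>
  define J where "J = rec_nat UNIV (\<lambda>i Ji. {j\<in>Ji. f i j = (SOME c. infinite {j\<in>Ji. f i j = c})})"
  define c where "c i = (SOME c. infinite {j\<in>J i. f i j = c})" for i
  have J_Suc: "J (Suc i) = {j\<in>J i. f i j = c i}" for i
    unfolding J_def c_def by simp
  have J_inf: "infinite (J i)" for i
  proof (induction i)
    case (Suc i)
    show ?case unfolding J_Suc c_def by (rule val[OF Suc.IH])
  qed (simp add: J_def)
  have J_agree: "j \<in> J i \<Longrightarrow> i' < i \<Longrightarrow> f i' j = c i'" for i i' j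
    by (induction i) (auto simp: J_Suc less_Suc_eq)
  have "\<exists>j\<ge>i. \<forall>i'\<le>i. f i' j = c i'" for i
    using J_inf[of "Suc i"] J_agree[of _ "Suc i"] infinite_nat_iff_unbounded_le by fastforce
  then show ?thesis by blast
qed

primrec reach :: "('a \<Rightarrow> 'a \<Rightarrow> bool) \<Rightarrow> 'a set \<Rightarrow> nat \<Rightarrow> 'a set" where
  "reach E A 0 = A"
| "reach E A (Suc n) = reach E A n \<union> {v. \<exists>u\<in>reach E A n. E u v}"

lemma reach_mono: "m \<le> n \<Longrightarrow> reach E A m \<subseteq> reach E A n"
  by (rule lift_Suc_mono_le[of "reach E A"]) auto

lemma finite_reach: "finite A \<Longrightarrow> (\<And>u. finite {v. E u v}) \<Longrightarrow> finite (reach E A n)"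
proof (induction n)
  case (Suc n)
  have "{v. \<exists>u\<in>reach E A n. E u v} = (\<Union>u\<in>reach E A n. {v. E u v})" by blast
  with Suc show ?case by simp
qed simp

lemma lazy_walk_leaves_reach:
  assumes step: "\<And>i. w i = w (Suc i) \<or> H (w i) (w (Suc i))"
    and "w 0 \<in> A" "w t \<notin> reach H A j"
  shows "\<exists>l. successively (\<lambda>a b. a = b \<or> H a b \<and> a \<in> reach H A (Suc j) \<and> b \<in> reach H A (Suc j)) l
    \<and> l \<noteq> [] \<and> hd l \<in> A \<and> last l \<notin> reach H A j \<and> set l \<subseteq> range w"
proof -
  define t0 where "t0 = (LEAST t. w t \<notin> reach H A j)"
  have "w t0 \<notin> reach H A j" unfolding t0_def by (rule LeastI[of _ t]) (rule assms(3))
  have before: "w i \<in> reach H A j" if "i < t0" for i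
    using not_less_Least[OF that[unfolded t0_def]] by simp
  have "A \<subseteq> reach H A j" using reach_mono[of 0 j H A] by simp
  then obtain t1 where t1: "t0 = Suc t1" using \<open>w t0 \<notin> reach H A j\<close> assms(2) not0_implies_Suc
    by (metis subsetD)
  have inside: "w i \<in> reach H A (Suc j)" if "i \<le> t0" for i
  proof (cases "i < t0")
    case True
    then show ?thesis using before by simp
  next
    case False
    with that t1 have "i = Suc t1" by simp
    moreover have "w t1 \<in> reach H A j" using before t1 by simp
    ultimately show ?thesis using step[of t1] by auto
  qed
  let ?l = "map w [0..<Suc t0]"
  have "successively (\<lambda>a b. a = b \<or> H a b \<and> a \<in> reach H A (Suc j) \<and> b \<in> reach H A (Suc j)) ?l"
    unfolding successively_conv_nth using step inside by (auto simp del: upt_Suc)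
  moreover have "hd ?l = w 0" "last ?l = w t0" by (simp_all del: upt_Suc add: hd_map last_map)
  ultimately show ?thesis using assms(2) \<open>w t0 \<notin> reach H A j\<close> by (intro exI[of _ ?l]) auto
qed

lemma set_prefix_to_first_compl:
  "successively E p \<Longrightarrow> p \<noteq> [] \<Longrightarrow> hd p \<in> F \<Longrightarrow>
   set (prefix_to_first (- F) p) \<subseteq> F \<union> {v. \<exists>u\<in>F. E u v}"
  by (induction p rule: induct_list012) auto

lemma exit_prefix:
  assumes "is_path E p" "hd p \<in> A" "\<not> set p \<subseteq> reach E A n"
  defines "q \<equiv> prefix_to_first (- reach E A n) p"
  shows "is_path E q \<and> hd q \<in> A \<and> last q \<notin> reach E A n \<and> set q \<subseteq> reach E A (Suc n)"
proof -
  have "set p \<inter> - reach E A n \<noteq> {}" using assms(3) by blast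
  from ab_path_prefix_to_first[OF assms(1,2) this]
  have q: "is_path E q" "hd q \<in> A" "last q \<notin> reach E A n" unfolding q_def ab_path_def by auto
  have "successively E p" "p \<noteq> []" using assms(1) unfolding is_path_def by auto
  moreover have "hd p \<in> reach E A n" using assms(2) reach_mono[of 0 n E A] by auto
  ultimately have "set q \<subseteq> reach E A (Suc n)"
    using set_prefix_to_first_compl[of E p] unfolding q_def by simp
  with q show ?thesis by blast
qed

lemma coherent_exit_prefixes:
  fixes P :: "nat \<Rightarrow> nat \<Rightarrow> 'a list"
  assumes fin: "\<And>n. finite (reach E A n)"
    and P: "\<And>n t. t < m \<Longrightarrow> is_path E (P n t) \<and> hd (P n t) \<in> A \<and> \<not> set (P n t) \<subseteq> reach E A n"
  shows "\<exists>c. \<forall>n. \<exists>j\<ge>n. \<forall>n'\<le>n. \<forall>t<m. c n' t = prefix_to_first (- reach E A n') (P j t)"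
proof -
  let ?cut = "\<lambda>n j t. prefix_to_first (- reach E A n) (P j t)"
  \<comment> \<open>the cuts at level \<open>n\<close> are paths in the finite ball of radius \<open>n + 1\<close>, so there are
    only finitely many\<close>
  define M where "M n = {..<m} \<rightarrow>\<^sub>E
    {xs. set xs \<subseteq> reach E A (Suc n) \<and> length xs \<le> card (reach E A (Suc n))}" for n
  have "finite (M n)" for n
    unfolding M_def by (intro finite_PiE finite_lists_length_le fin) simp
  moreover have "restrict (?cut n j) {..<m} \<in> M n" if "n \<le> j" for n j
  proof -
    have "set (?cut n j t) \<subseteq> reach E A (Suc n) \<and> length (?cut n j t) \<le> card (reach E A (Suc n))"
      if "t < m" for t
    proof -
      have "is_path E (P j t)" "hd (P j t) \<in> A" "\<not> set (P j t) \<subseteq> reach E A n"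
        using P[OF that, of j] reach_mono[OF \<open>n \<le> j\<close>, of E A] by auto
      from exit_prefix[OF this]
      have "distinct (?cut n j t)" "set (?cut n j t) \<subseteq> reach E A (Suc n)"
        unfolding is_path_def by auto
      moreover from this(2) have "card (set (?cut n j t)) \<le> card (reach E A (Suc n))"
        by (rule card_mono[OF fin])
      ultimately show ?thesis by (simp add: distinct_card)
    qed
    then show ?thesis unfolding M_def by auto
  qed
  ultimately obtain c where c: "\<forall>n. \<exists>j\<ge>n. \<forall>n'\<le>n. restrict (?cut n' j) {..<m} = c n'"
    using koenig_diagonal[of M "\<lambda>n j. restrict (?cut n j) {..<m}"] by blast
  show ?thesis
  proof (intro exI[of _ c] allI)
    fix n
    from c obtain j where "j \<ge> n" "\<forall>n'\<le>n. restrict (?cut n' j) {..<m} = c n'" by blast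
    then show "\<exists>j\<ge>n. \<forall>n'\<le>n. \<forall>t<m. c n' t = ?cut n' j t"
      by (metis lessThan_iff restrict_apply')
  qed
qed

lemma ray_of_prefix_chain:
  assumes chain: "\<And>n. prefix (c n) (c (Suc n))" and strict: "\<And>n. c n \<noteq> c (Suc n)"
    and path: "\<And>n. is_path E (c n)"
  shows "ray UNIV E (\<lambda>n. c n ! n)" and "n \<le> i \<Longrightarrow> c n ! n \<in> set (c i)"
proof -
  have pre: "prefix (c n) (c i)" if "n \<le> i" for n i
    using that by (induction rule: dec_induct) (auto intro: prefix_order.trans chain)
  have long: "n < length (c n)" for n
  proof (induction n)
    case 0
    show ?case using path[of 0] unfolding is_path_def by simp
  next
    case (Suc n)
    have "length (c n) < length (c (Suc n))"
      using chain strict by (intro prefix_length_less) (simp add: strict_prefix_def)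
    with Suc show ?case by simp
  qed
  have nth: "c n ! n = c i ! n" and len: "n < length (c i)" if "n \<le> i" for n i
    using pre[OF that] long[of n] by (auto simp: prefix_def nth_append)
  then show "n \<le> i \<Longrightarrow> c n ! n \<in> set (c i)" by simp
  show "ray UNIV E (\<lambda>n. c n ! n)"
    unfolding ray_def
  proof (intro conjI allI injI)
    fix a b assume "c a ! a = c b ! b"
    then have "c (max a b) ! a = c (max a b) ! b" using nth[of a "max a b"] nth[of b "max a b"] by simp
    moreover have "distinct (c (max a b))" using path unfolding is_path_def by blast
    ultimately show "a = b" using len[of a "max a b"] len[of b "max a b"]
      by (simp add: nth_eq_iff_index_eq)
  next
    fix n
    have "successively E (c (Suc n))" using path unfolding is_path_def by blast
    then show "E (c n ! n) (c (Suc n) ! Suc n)"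
      using successively_nth[of E "c (Suc n)" n] nth[of n "Suc n"] long[of "Suc n"] by simp
  qed simp
qed

lemma disjoint_rays_from_exit_paths:
  fixes P :: "nat \<Rightarrow> nat \<Rightarrow> 'a list"
  assumes fin: "\<And>n. finite (reach E A n)"
    and P: "\<And>n t. t < m \<Longrightarrow> is_path E (P n t) \<and> hd (P n t) \<in> A \<and> \<not> set (P n t) \<subseteq> reach E A n"
    and disj: "\<And>n t t'. t < m \<Longrightarrow> t' < m \<Longrightarrow> t \<noteq> t' \<Longrightarrow> set (P n t) \<inter> set (P n t') = {}"
  shows "\<exists>r. (\<forall>t<m. ray UNIV E (r t)) \<and> (\<forall>t<m. \<forall>t'<m. t \<noteq> t' \<longrightarrow> range (r t) \<inter> range (r t') = {})"
proof -
  from coherent_exit_prefixes[OF fin P] obtain c where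
    c: "\<forall>n. \<exists>j\<ge>n. \<forall>n'\<le>n. \<forall>t<m. c n' t = prefix_to_first (- reach E A n') (P j t)" ..
  have c_exit: "is_path E (c n t) \<and> last (c n t) \<notin> reach E A n \<and> set (c n t) \<subseteq> reach E A (Suc n)"
    if "t < m" for n t
  proof -
    from c obtain j where "j \<ge> n" "\<forall>n'\<le>n. \<forall>t<m. c n' t = prefix_to_first (- reach E A n') (P j t)"
      by blast
    then have j: "c n t = prefix_to_first (- reach E A n) (P j t)" using that by simp
    have "is_path E (P j t) \<and> hd (P j t) \<in> A \<and> \<not> set (P j t) \<subseteq> reach E A j" using P[OF that] .
    moreover have "reach E A n \<subseteq> reach E A j" using reach_mono[OF \<open>j \<ge> n\<close>] .
    ultimately have "is_path E (P j t)" "hd (P j t) \<in> A" "\<not> set (P j t) \<subseteq> reach E A n"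
      by auto
    from exit_prefix[OF this] show ?thesis unfolding j by blast
  qed
  have c_chain: "c n t = prefix_to_first (- reach E A n) (c (Suc n) t)" if "t < m" for n t
  proof -
    from c obtain j where j: "\<forall>n'\<le>Suc n. \<forall>t<m. c n' t = prefix_to_first (- reach E A n') (P j t)"
      by blast
    have "- reach E A (Suc n) \<subseteq> - reach E A n" by (rule Compl_anti_mono[OF reach_mono]) simp
    then show ?thesis using j that by (simp add: prefix_to_first_prefix_to_first)
  qed
  define r where "r t n = c n t ! n" for t n
  have ray: "ray UNIV E (r t)" and in_c: "n \<le> i \<Longrightarrow> r t n \<in> set (c i t)" if "t < m" for t n i
  proof -
    have "last (c n t) \<in> reach E A (Suc n)" for n
      using c_exit[OF that, of n] unfolding is_path_def by (metis last_in_set subsetD)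
    moreover have "last (c (Suc n) t) \<notin> reach E A (Suc n)" for n using c_exit[OF that] by blast
    ultimately have "c n t \<noteq> c (Suc n) t" for n by metis
    from ray_of_prefix_chain[where c = "\<lambda>n. c n t", OF _ this]
    show "ray UNIV E (r t)" "n \<le> i \<Longrightarrow> r t n \<in> set (c i t)"
      unfolding r_def using c_chain[OF that] c_exit[OF that] prefix_prefix_to_first by metis+
  qed
  have "range (r t) \<inter> range (r t') = {}" if "t < m" "t' < m" "t \<noteq> t'" for t t'
  proof (rule ccontr)
    assume "range (r t) \<inter> range (r t') \<noteq> {}"
    then obtain a b where ab: "r t a = r t' b" by auto
    obtain j where j: "\<forall>t<m. c (max a b) t = prefix_to_first (- reach E A (max a b)) (P j t)"
      using c by blast
    have "r t a \<in> set (c (max a b) t)" "r t' b \<in> set (c (max a b) t')"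
      using in_c[OF that(1), of a "max a b"] in_c[OF that(2), of b "max a b"] by simp_all
    moreover have "set (c (max a b) t) \<subseteq> set (P j t)" "set (c (max a b) t') \<subseteq> set (P j t')"
      using j that(1,2) set_mono_prefix[OF prefix_prefix_to_first] by simp_all
    ultimately have "r t a \<in> set (P j t) \<inter> set (P j t')" using ab by auto
    then show False using disj[OF that, of j] by simp
  qed
  with ray show ?thesis by blast
qed

section \<open>Ends\<close>

lemma graph_symp: "graph V E \<Longrightarrow> symp E"
  unfolding graph_def symp_def by blast

lemma conn_in_trans: "conn_in E U x y \<Longrightarrow> conn_in E U y z \<Longrightarrow> conn_in E U x z"
  unfolding conn_in_def by (meson rtranclp_trans)

lemma conn_in_sym:
  assumes "symp E" "conn_in E U x y"
  shows "conn_in E U y x"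
proof -
  let ?R = "\<lambda>a b. E a b \<and> a \<in> U \<and> b \<in> U"
  have xy: "?R\<^sup>*\<^sup>* x y" and "x \<in> U" using assms(2) unfolding conn_in_def by auto
  then have "y \<in> U" by (induction rule: rtranclp_induct) auto
  have "symp ?R" using assms(1) unfolding symp_def by blast
  from sympD[OF symp_rtranclp[OF this] xy] have "?R\<^sup>*\<^sup>* y x" .
  with \<open>y \<in> U\<close> show ?thesis unfolding conn_in_def by simp
qed

lemma conn_in_ray_tail:
  assumes "\<And>i. E (r i) (r (Suc i))" "\<And>i. N \<le> i \<Longrightarrow> r i \<in> U" "symp E" "N \<le> i" "N \<le> j"
  shows "conn_in E U (r i) (r j)"
proof -
  have forward: "conn_in E U (r i) (r (i + d))" if "N \<le> i" for i d
  proof (induction d)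
    case 0
    show ?case using assms(2) that unfolding conn_in_def by simp
  next
    case (Suc d)
    then show ?case using assms(1,2) that unfolding conn_in_def
      by (simp add: rtranclp.rtrancl_into_rtrancl)
  qed
  show ?thesis
  proof (cases "i \<le> j")
    case True
    then show ?thesis using forward[OF assms(4), of "j - i"] by simp
  next
    case False
    then show ?thesis using forward[OF assms(5), of "i - j"] conn_in_sym[OF assms(3)] by simp
  qed
qed

lemma inj_eventually_avoids:
  fixes r :: "nat \<Rightarrow> 'a"
  assumes "inj r" "finite S"
  shows "\<exists>N. \<forall>i\<ge>N. r i \<notin> S"
proof -
  have "finite (r -` S)" using assms by (simp add: finite_vimageI)
  then obtain N where "\<forall>i\<in>r -` S. i < N" using finite_nat_set_iff_bounded by blast
  then show ?thesis by (metis not_le vimageI)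
qed

lemma ray_equiv_refl:
  assumes "symp E" "ray V E r"
  shows "ray_equiv V E r r"
  unfolding ray_equiv_def
proof (intro allI impI)
  fix S assume S: "finite S \<and> S \<subseteq> V"
  have r: "inj r" "\<And>i. r i \<in> V" "\<And>i. E (r i) (r (Suc i))" using assms(2) unfolding ray_def by auto
  obtain N where N: "\<forall>i\<ge>N. r i \<notin> S" using inj_eventually_avoids[OF r(1)] S by blast
  have "conn_in E (V - S) (r i) (r j)" if "N \<le> i" "N \<le> j" for i j
  proof (rule conn_in_ray_tail[where r = r and E = E, OF r(3) _ assms(1) that])
    show "r i \<in> V - S" if "N \<le> i" for i using r(2) N that by blast
  qed
  then show "\<exists>n m. \<forall>i\<ge>n. \<forall>j\<ge>m. conn_in E (V - S) (r i) (r j)" by blast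
qed

lemma ray_equiv_sym: "symp E \<Longrightarrow> ray_equiv V E r s \<Longrightarrow> ray_equiv V E s r"
  unfolding ray_equiv_def by (meson conn_in_sym)

lemma ray_equiv_trans: "ray_equiv V E r s \<Longrightarrow> ray_equiv V E s t \<Longrightarrow> ray_equiv V E r t"
  unfolding ray_equiv_def by (meson conn_in_trans max.cobounded1 max.cobounded2)

lemma ends_obtain:
  assumes "\<alpha> \<in> ends V E"
  obtains r where "ray V E r" "\<alpha> = {s. ray V E s \<and> ray_equiv V E r s}"
  using assms unfolding ends_def by blast

lemma end_rays: "\<alpha> \<in> ends V E \<Longrightarrow> r \<in> \<alpha> \<Longrightarrow> ray V E r"
  by (metis (no_types, lifting) ends_obtain mem_Collect_eq)

lemma end_nonempty: "symp E \<Longrightarrow> \<alpha> \<in> ends V E \<Longrightarrow> \<alpha> \<noteq> {}"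
  by (metis (no_types, lifting) empty_iff ends_obtain mem_Collect_eq ray_equiv_refl)

lemma end_rays_equiv:
  assumes "symp E" "\<alpha> \<in> ends V E" "r \<in> \<alpha>" "s \<in> \<alpha>"
  shows "ray_equiv V E r s"
proof -
  obtain r0 where "\<alpha> = {s. ray V E s \<and> ray_equiv V E r0 s}" using ends_obtain[OF assms(2)] .
  then have "ray_equiv V E r0 r" "ray_equiv V E r0 s" using assms(3,4) by auto
  then show ?thesis using ray_equiv_sym[OF assms(1)] ray_equiv_trans by blast
qed

lemma end_closed:
  assumes "\<alpha> \<in> ends V E" "r \<in> \<alpha>" "ray V E s" "ray_equiv V E r s"
  shows "s \<in> \<alpha>"
proof -
  obtain r0 where \<alpha>: "\<alpha> = {s. ray V E s \<and> ray_equiv V E r0 s}" using ends_obtain[OF assms(1)] .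
  then have "ray_equiv V E r0 r" using assms(2) by auto
  then show ?thesis using \<alpha> assms(3,4) ray_equiv_trans by blast
qed

lemma finite_uniform_tails:
  fixes P :: "'a \<Rightarrow> nat \<Rightarrow> nat \<Rightarrow> bool"
  assumes "finite X" "\<And>x. x \<in> X \<Longrightarrow> \<exists>n m. \<forall>i\<ge>n. \<forall>j\<ge>m. P x i j"
  shows "\<exists>N M. \<forall>x\<in>X. \<forall>i\<ge>N. \<forall>j\<ge>M. P x i j"
proof -
  obtain n m where nm: "\<And>x. x \<in> X \<Longrightarrow> \<forall>i\<ge>n x. \<forall>j\<ge>m x. P x i j" using assms(2) by metis
  have "n x \<le> sum n X" "m x \<le> sum m X" if "x \<in> X" for x
    using assms(1) that by (auto intro: member_le_sum)
  then show ?thesis using nm by (meson order_trans)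
qed

definition disjoint_rays :: "(nat \<Rightarrow> 'a) set \<Rightarrow> (nat \<Rightarrow> 'a) set set" where
  "disjoint_rays \<alpha> = {R. finite R \<and> R \<subseteq> \<alpha> \<and> disjoint_family_on range R}"

lemma end_degree_eq_SUP: "end_degree \<alpha> = (SUP R\<in>disjoint_rays \<alpha>. enat (card R))"
  unfolding end_degree_def disjoint_rays_def disjoint_family_on_def ..

section \<open>Ends of Cartesian products\<close>

lemma cart_E_symp: "graph VG EG \<Longrightarrow> graph VD ED \<Longrightarrow> symp (cart_E EG ED)"
  using graph_symp[of VG EG] graph_symp[of VD ED] unfolding cart_E_def by (auto intro!: sympI dest: sympD)

lemma ray_lift:
  "ray VG EG r \<Longrightarrow> y \<in> VD \<Longrightarrow> ray (cart_V VG VD) (cart_E EG ED) (\<lambda>i. (r i, y))"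
  unfolding ray_def cart_V_def cart_E_def inj_def by simp

lemma conn_in_project:
  assumes "conn_in (cart_E EG ED) (cart_V VG VD - S \<times> VD) p q"
  shows "conn_in EG (VG - S) (fst p) (fst q)"
proof -
  let ?U = "cart_V VG VD - S \<times> VD"
  have fst_U: "a \<in> ?U \<Longrightarrow> fst a \<in> VG - S" for a unfolding cart_V_def by (cases a) auto
  have "(\<lambda>a b. cart_E EG ED a b \<and> a \<in> ?U \<and> b \<in> ?U)\<^sup>*\<^sup>* p q" "p \<in> ?U"
    using assms unfolding conn_in_def by auto
  then show ?thesis
  proof (induction rule: rtranclp_induct)
    case base
    then show ?case using fst_U unfolding conn_in_def by simp
  next
    case (step b c)
    then have "fst b = fst c \<or> EG (fst b) (fst c) \<and> fst b \<in> VG - S \<and> fst c \<in> VG - S"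
      using fst_U unfolding cart_E_def by auto
    with step show ?case unfolding conn_in_def by (auto intro: rtranclp.rtrancl_into_rtrancl)
  qed
qed

lemma conn_in_fibre:
  assumes "conn_in ED VD a b" "v \<in> VG" "v \<notin> fst ` S"
  shows "conn_in (cart_E EG ED) (cart_V VG VD - S) (v, a) (v, b)"
proof -
  have "(\<lambda>a b. ED a b \<and> a \<in> VD \<and> b \<in> VD)\<^sup>*\<^sup>* a b" "a \<in> VD"
    using assms(1) unfolding conn_in_def by auto
  then show ?thesis
  proof (induction rule: rtranclp_induct)
    case base
    then show ?case using assms(2,3) unfolding conn_in_def cart_V_def by (auto simp: rev_image_eqI)
  next
    case (step b c)
    then show ?case using assms(2,3) unfolding conn_in_def cart_V_def cart_E_def
      by (auto simp: rev_image_eqI intro: rtranclp.rtrancl_into_rtrancl)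
  qed
qed

lemma ray_lift_in_end:
  assumes "graph VG EG" "graph VD ED" "connected_graph VD ED" "x0 \<in> VD" "y \<in> VD"
    and \<alpha>': "\<alpha>' \<in> ends (cart_V VG VD) (cart_E EG ED)"
    and r: "ray VG EG r" "(\<lambda>i. (r i, x0)) \<in> \<alpha>'"
  shows "(\<lambda>i. (r i, y)) \<in> \<alpha>'"
proof (rule end_closed[OF \<alpha>' r(2) ray_lift[OF r(1) assms(5)]])
  let ?V = "cart_V VG VD" and ?E = "cart_E EG ED"
  show "ray_equiv ?V ?E (\<lambda>i. (r i, x0)) (\<lambda>i. (r i, y))"
    unfolding ray_equiv_def
  proof (intro allI impI)
    fix S assume S: "finite S \<and> S \<subseteq> ?V"
    obtain N where N: "\<forall>i\<ge>N. r i \<notin> fst ` S"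
      using inj_eventually_avoids[of r "fst ` S"] r(1) S unfolding ray_def by blast
    have r_VG: "r i \<in> VG" for i using r(1) unfolding ray_def by blast
    have layer: "(r i, z) \<in> ?V - S" if "N \<le> i" "z \<in> VD" for i z
      using N that r_VG unfolding cart_V_def by (auto simp: rev_image_eqI)
    have "conn_in ?E (?V - S) (r i, x0) (r j, y)" if "N \<le> i" "N \<le> j" for i j
    proof -
      have "conn_in ED VD x0 y" using assms(3,4,5) unfolding connected_graph_def by blast
      moreover have "r i \<notin> fst ` S" using N that(1) by blast
      ultimately have "conn_in ?E (?V - S) (r i, x0) (r i, y)" by (rule conn_in_fibre[OF _ r_VG])
      moreover have "?E (r l, y) (r (Suc l), y)" for l
        using r(1) unfolding ray_def cart_E_def by simp
      from conn_in_ray_tail[where r = "\<lambda>i. (r i, y)", OF this _ cart_E_symp[OF assms(1,2)] that]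
      have "conn_in ?E (?V - S) (r i, y) (r j, y)" using layer assms(5) by blast
      ultimately show ?thesis by (rule conn_in_trans)
    qed
    then show "\<exists>n m. \<forall>i\<ge>n. \<forall>j\<ge>m. conn_in ?E (?V - S) (r i, x0) (r j, y)" by blast
  qed
qed

lemma disjoint_rays_lift:
  assumes "graph VG EG" "graph VD ED" "connected_graph VD ED" "finite VD" "x0 \<in> VD"
    and \<alpha>: "\<alpha> \<in> ends VG EG" and \<alpha>': "\<alpha>' \<in> ends (cart_V VG VD) (cart_E EG ED)"
    and sub: "(\<lambda>r i. (r i, x0)) ` \<alpha> \<subseteq> \<alpha>'"
    and R: "R \<in> disjoint_rays \<alpha>"
  shows "\<exists>R'\<in>disjoint_rays \<alpha>'. card R' = card R * card VD"
proof
  let ?lift = "\<lambda>(r, y) i. (r i :: 'a, y :: 'b)"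
  have R: "finite R" "R \<subseteq> \<alpha>" "disjoint_family_on range R"
    using R unfolding disjoint_rays_def by auto
  have "inj_on ?lift (R \<times> VD)"
    by (rule inj_onI) (auto simp: fun_eq_iff)
  then show "card (?lift ` (R \<times> VD)) = card R * card VD"
    by (simp add: card_image card_cartesian_product)
  have "(\<lambda>i. (r i, y)) \<in> \<alpha>'" if "r \<in> R" "y \<in> VD" for r y
  proof -
    have "r \<in> \<alpha>" "(\<lambda>i. (r i, x0)) \<in> \<alpha>'" using that(1) R(2) sub by auto
    from ray_lift_in_end[OF assms(1-3,5) that(2) \<alpha>' end_rays[OF \<alpha> this(1)] this(2)]
    show ?thesis .
  qed
  then have "?lift ` (R \<times> VD) \<subseteq> \<alpha>'" by auto
  moreover have "disjoint_family_on range (?lift ` (R \<times> VD))"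
    unfolding disjoint_family_on_def
  proof (intro ballI impI)
    fix a b assume "a \<in> ?lift ` (R \<times> VD)" "b \<in> ?lift ` (R \<times> VD)" "a \<noteq> b"
    then obtain r y s z where "r \<in> R" "s \<in> R" "a = (\<lambda>i. (r i, y))" "b = (\<lambda>i. (s i, z))"
      by auto
    with \<open>a \<noteq> b\<close> show "range a \<inter> range b = {}"
      using R(3) unfolding disjoint_family_on_def by (cases "r = s") auto
  qed
  ultimately show "?lift ` (R \<times> VD) \<in> disjoint_rays \<alpha>'"
    using R(1) assms(4) unfolding disjoint_rays_def by auto
qed

lemma disjoint_rays_avoid_small_set:
  assumes "disjoint_family_on range R'" "\<And>r i. r \<in> R' \<Longrightarrow> snd (r i) \<in> VD" "finite VD"
    and "finite T" "card T * card VD < card R'"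
  shows "\<exists>r\<in>R'. \<forall>i. fst (r i) \<notin> T"
proof (rule ccontr)
  assume "\<not> ?thesis"
  then obtain pick where pick: "fst (r (pick r)) \<in> T" if "r \<in> R'" for r by metis
  have "inj_on (\<lambda>r. r (pick r)) R'"
  proof (rule inj_onI)
    fix r s assume "r \<in> R'" "s \<in> R'" "r (pick r) = s (pick s)"
    then show "r = s" using assms(1) unfolding disjoint_family_on_def by blast
  qed
  moreover have "(\<lambda>r. r (pick r)) ` R' \<subseteq> T \<times> VD"
    unfolding image_subset_iff mem_Times_iff using pick assms(2) by blast
  ultimately have "card R' \<le> card (T \<times> VD)"
    using assms(3,4) by (intro card_inj_on_le) auto
  then show False using assms(5) by (simp add: card_cartesian_product)
qed

lemma finite_visits:
  fixes r :: "nat \<Rightarrow> 'a \<times> 'b"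
  assumes "inj r" "\<And>i. snd (r i) \<in> VD" "finite VD"
  shows "finite {i. fst (r i) = u}"
proof -
  have "r ` {i. fst (r i) = u} \<subseteq> {u} \<times> VD"
    unfolding image_subset_iff mem_Times_iff using assms(2) by simp
  then have "finite (r ` {i. fst (r i) = u})" using assms(3) finite_subset by blast
  then show ?thesis using assms(1) finite_imageD inj_on_subset by blast
qed

text \<open>Each vertex is visited only finitely often by finitely many rays of \<open>G \<box> D\<close>, so this
  subgraph of \<open>G\<close> is locally finite even when \<open>G\<close> is not.\<close>

definition trace_graph :: "('a \<Rightarrow> 'a \<Rightarrow> bool) \<Rightarrow> (nat \<Rightarrow> 'a \<times> 'b) set \<Rightarrow> 'a \<Rightarrow> 'a \<Rightarrow> bool" where
  "trace_graph EG R' u v \<longleftrightarrow> EG u v \<and> (\<exists>r\<in>R'. \<exists>i.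
     fst (r i) = u \<and> fst (r (Suc i)) = v \<or> fst (r i) = v \<and> fst (r (Suc i)) = u)"

lemma trace_graph_locally_finite:
  assumes "finite R'" "\<And>r. r \<in> R' \<Longrightarrow> inj r" "\<And>r i. r \<in> R' \<Longrightarrow> snd (r i) \<in> VD" "finite VD"
  shows "finite {v. trace_graph EG R' u v}"
proof -
  have "{v. trace_graph EG R' u v} \<subseteq>
    (\<Union>r\<in>R'. (\<lambda>i. fst (r (Suc i))) ` {i. fst (r i) = u} \<union> (\<lambda>i. fst (r i)) ` {i. fst (r (Suc i)) = u})"
    unfolding trace_graph_def by blast
  moreover have "finite {i. fst (r i) = u}" "finite {i. fst (r (Suc i)) = u}" if "r \<in> R'" for r
    using finite_visits[of r VD u] finite_visits[of "r \<circ> Suc" VD u] assms(2-4) that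
    by (auto simp: inj_def)
  ultimately show ?thesis using assms(1) by (auto intro: finite_subset)
qed

lemma trace_graph_step:
  assumes "r \<in> R'" "cart_E EG ED (r i) (r (Suc i))"
  shows "fst (r i) = fst (r (Suc i)) \<or> trace_graph EG R' (fst (r i)) (fst (r (Suc i)))"
  using assms unfolding cart_E_def trace_graph_def by blast

lemma finite_reach_trace_graph:
  assumes "finite R'" "\<And>r. r \<in> R' \<Longrightarrow> ray (cart_V VG VD) (cart_E EG ED) r" "finite VD"
  shows "finite (reach (trace_graph EG R') ((\<lambda>r. fst (r 0)) ` R') n)"
proof (rule finite_reach)
  have "inj r" "snd (r i) \<in> VD" if "r \<in> R'" for r i
    using assms(2)[OF that] unfolding ray_def cart_V_def by (auto simp: mem_Times_iff)
  then show "finite {v. trace_graph EG R' u v}" for u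
    using trace_graph_locally_finite[OF assms(1) _ _ assms(3)] by blast
qed (use assms(1) in simp)

lemma trace_graph_separator_large:
  assumes R': "disjoint_family_on range R'" "\<And>r. r \<in> R' \<Longrightarrow> ray (cart_V VG VD) (cart_E EG ED) r"
    and VD: "finite VD" and big: "k * card VD < card R'"
    and fin: "finite (reach (trace_graph EG R') A j)" and A: "(\<lambda>r. fst (r 0)) ` R' \<subseteq> A"
    and T: "finite T" "separates (\<lambda>u v. trace_graph EG R' u v \<and> u \<in> reach (trace_graph EG R') A (Suc j)
      \<and> v \<in> reach (trace_graph EG R') A (Suc j)) A (- reach (trace_graph EG R') A j) T"
  shows "Suc k \<le> card T"
proof (rule ccontr)
  let ?H = "trace_graph EG R'"
  assume "\<not> Suc k \<le> card T"
  then have "card T * card VD < card R'" using big by (meson le_less_trans mult_le_mono1 not_less_eq_eq)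
  moreover have snd_VD: "snd (r i) \<in> VD" if "r \<in> R'" for r i
    using R'(2)[OF that] unfolding ray_def cart_V_def by (auto simp: mem_Times_iff)
  ultimately obtain r where r: "r \<in> R'" "\<forall>i. fst (r i) \<notin> T"
    using disjoint_rays_avoid_small_set[OF R'(1) _ VD T(1)] by blast
  have ray: "inj r" "\<And>i. cart_E EG ED (r i) (r (Suc i))" using R'(2)[OF r(1)] unfolding ray_def by auto
  have "{i. fst (r i) \<in> reach ?H A j} = (\<Union>u\<in>reach ?H A j. {i. fst (r i) = u})" by blast
  then have "finite {i. fst (r i) \<in> reach ?H A j}"
    using fin finite_visits[OF ray(1) snd_VD[OF r(1)] VD] by simp
  then obtain t where t: "fst (r t) \<notin> reach ?H A j" using infinite_UNIV_nat
    by (metis (mono_tags, lifting) UNIV_I mem_Collect_eq subsetI finite_subset)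
  have "fst (r 0) \<in> A" using A r(1) by blast
  moreover have "fst (r i) = fst (r (Suc i)) \<or> ?H (fst (r i)) (fst (r (Suc i)))" for i
    using trace_graph_step[OF r(1) ray(2)] .
  from lazy_walk_leaves_reach[where w = "\<lambda>i. fst (r i)", OF this calculation t]
  obtain l where l: "successively (\<lambda>a b. a = b \<or> ?H a b \<and> a \<in> reach ?H A (Suc j)
      \<and> b \<in> reach ?H A (Suc j)) l" "l \<noteq> []" "hd l \<in> A" "last l \<notin> reach ?H A j"
    "set l \<subseteq> range (\<lambda>i. fst (r i))"
    by blast
  from separates_walk[OF T(2) l(1-3)] l(4) have "set l \<inter> T \<noteq> {}" by simp
  then show False using l(5) r(2) by blast
qed

lemma trace_graph_exit_paths:
  assumes G: "graph VG EG"
    and R': "finite R'" "disjoint_family_on range R'" "\<And>r. r \<in> R' \<Longrightarrow> ray (cart_V VG VD) (cart_E EG ED) r"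
    and VD: "finite VD" and big: "k * card VD < card R'"
  defines "H \<equiv> trace_graph EG R'" and "A \<equiv> (\<lambda>r. fst (r 0)) ` R'"
  shows "\<exists>P. (\<forall>t<Suc k. is_path H (P t) \<and> hd (P t) \<in> A \<and> \<not> set (P t) \<subseteq> reach H A j) \<and>
    (\<forall>t<Suc k. \<forall>t'<Suc k. t \<noteq> t' \<longrightarrow> set (P t) \<inter> set (P t') = {})"
proof -
  have fin: "finite (reach H A n)" for n
    unfolding H_def A_def using finite_reach_trace_graph[OF R'(1,3) VD] .
  have "finite A" unfolding A_def using R'(1) by simp
  define H' where "H' u v \<longleftrightarrow> H u v \<and> u \<in> reach H A (Suc j) \<and> v \<in> reach H A (Suc j)" for u v
  have "{(u, v). H' u v} \<subseteq> reach H A (Suc j) \<times> reach H A (Suc j)" unfolding H'_def by auto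
  then have "finite {(u, v). H' u v}" using fin finite_subset by blast
  moreover have "\<not> H' v v" for v using G unfolding H'_def H_def trace_graph_def graph_def by blast
  moreover have "Suc k \<le> card T" if "finite T" "separates H' A (- reach H A j) T" for T
    using trace_graph_separator_large[OF R'(2,3) VD big fin[of j, unfolded H_def] _ that(1)] that(2)
    unfolding H'_def H_def A_def by blast
  ultimately obtain PP where PP: "finite PP" "card PP = Suc k" "disjoint_family_on set PP"
    "\<forall>p\<in>PP. ab_path H' A (- reach H A j) p"
    using menger[of H' A "- reach H A j" "Suc k"] \<open>finite A\<close> by blast
  obtain f where f: "bij_betw f {..<Suc k} PP"
    using ex_bij_betw_nat_finite[OF PP(1)] PP(2) by (metis atLeast0LessThan)
  have "is_path H (f t) \<and> hd (f t) \<in> A \<and> \<not> set (f t) \<subseteq> reach H A j" if "t < Suc k" for t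
  proof -
    have "ab_path H' A (- reach H A j) (f t)" using that f PP(4) bij_betwE by blast
    then have "ab_path H A (- reach H A j) (f t)" by (rule ab_path_mono) (simp add: H'_def)
    then show ?thesis unfolding ab_path_def is_path_def using last_in_set by blast
  qed
  moreover have "set (f t) \<inter> set (f t') = {}" if "t < Suc k" "t' < Suc k" "t \<noteq> t'" for t t'
  proof -
    have "f t \<noteq> f t'" "f t \<in> PP" "f t' \<in> PP"
      using f that unfolding bij_betw_def inj_on_def by auto
    then show ?thesis using PP(3) unfolding disjoint_family_on_def by blast
  qed
  ultimately show ?thesis by blast
qed

lemma projected_tails_conn_in:
  assumes "graph VG EG" "graph VD ED" "finite VD"
    and \<alpha>': "\<alpha>' \<in> ends (cart_V VG VD) (cart_E EG ED)" and "(\<lambda>i. (r0 i, x0)) \<in> \<alpha>'" "r' \<in> \<alpha>'"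
    and S: "finite S" "S \<subseteq> VG"
  shows "\<exists>n m. \<forall>i\<ge>n. \<forall>j\<ge>m. conn_in EG (VG - S) (r0 i) (fst (r' j))"
proof -
  let ?V = "cart_V VG VD" and ?E = "cart_E EG ED"
  have "ray_equiv ?V ?E (\<lambda>i. (r0 i, x0)) r'"
    using end_rays_equiv[OF cart_E_symp[OF assms(1,2)] \<alpha>' assms(5,6)] .
  moreover have "finite (S \<times> VD) \<and> S \<times> VD \<subseteq> ?V" using S assms(3) unfolding cart_V_def by auto
  ultimately obtain n m where nm: "\<forall>i\<ge>n. \<forall>j\<ge>m. conn_in ?E (?V - S \<times> VD) (r0 i, x0) (r' j)"
    unfolding ray_equiv_def by presburger
  have "conn_in EG (VG - S) (r0 i) (fst (r' j))" if "n \<le> i" "m \<le> j" for i j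
    using conn_in_project[of EG ED VG VD S "(r0 i, x0)" "r' j"] nm that by simp
  then show ?thesis by blast
qed

lemma trace_ray_in_end:
  assumes G: "graph VG EG" "graph VD ED" "finite VD"
    and \<alpha>: "\<alpha> \<in> ends VG EG" and \<alpha>': "\<alpha>' \<in> ends (cart_V VG VD) (cart_E EG ED)"
    and sub: "(\<lambda>r i. (r i, x0)) ` \<alpha> \<subseteq> \<alpha>'"
    and R': "finite R'" "R' \<subseteq> \<alpha>'"
    and r: "ray UNIV (trace_graph EG R') r"
  shows "r \<in> \<alpha>"
proof -
  obtain r0 where "r0 \<in> \<alpha>" using end_nonempty[OF graph_symp[OF G(1)] \<alpha>] by blast
  then have lift: "(\<lambda>i. (r0 i, x0)) \<in> \<alpha>'" using sub by blast
  have step: "trace_graph EG R' (r n) (r (Suc n))" for n using r unfolding ray_def by blast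
  then have "ray VG EG r" using r G(1) unfolding ray_def trace_graph_def graph_def by blast
  moreover have "ray_equiv VG EG r0 r" unfolding ray_equiv_def
  proof (intro allI impI)
    fix S assume S: "finite S \<and> S \<subseteq> VG"
    have "\<exists>n m. \<forall>i\<ge>n. \<forall>j\<ge>m. conn_in EG (VG - S) (r0 i) (fst (r' j))" if "r' \<in> R'" for r'
      using projected_tails_conn_in[OF G \<alpha>' lift] R'(2) that S by blast
    from finite_uniform_tails[where P = "\<lambda>r' i j. conn_in EG (VG - S) (r0 i) (fst (r' j))",
        OF R'(1) this]
    obtain N M
      where NM: "\<forall>r'\<in>R'. \<forall>i\<ge>N. \<forall>j\<ge>M. conn_in EG (VG - S) (r0 i) (fst (r' j))" by blast
    have "finite ((\<lambda>(r', i). fst (r' i)) ` (R' \<times> {..<M}))" using R'(1) by simp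
    then obtain K where K: "\<forall>n\<ge>K. r n \<notin> (\<lambda>(r', i). fst (r' i)) ` (R' \<times> {..<M})"
      using inj_eventually_avoids r unfolding ray_def by blast
    have "conn_in EG (VG - S) (r0 i) (r n)" if "N \<le> i" "K \<le> n" for i n
    proof -
      \<comment> \<open>late vertices of \<open>r\<close> are late vertices of projected rays\<close>
      obtain r' i' where r': "r' \<in> R'" "fst (r' i') = r n"
        using step[of n] unfolding trace_graph_def by blast
      have "M \<le> i'"
      proof (rule ccontr)
        assume "\<not> M \<le> i'"
        then have "(r', i') \<in> R' \<times> {..<M}" using r'(1) by simp
        from imageI[OF this, of "\<lambda>(r', i). fst (r' i)"]
        have "r n \<in> (\<lambda>(r', i). fst (r' i)) ` (R' \<times> {..<M})" using r'(2) by simp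
        then show False using K that(2) by blast
      qed
      then show ?thesis using NM r' that(1) by metis
    qed
    then show "\<exists>n m. \<forall>i\<ge>n. \<forall>j\<ge>m. conn_in EG (VG - S) (r0 i) (r j)" by blast
  qed
  ultimately show ?thesis using end_closed[OF \<alpha> \<open>r0 \<in> \<alpha>\<close>] by blast
qed

lemma disjoint_rays_project:
  assumes G: "graph VG EG" "graph VD ED" "finite VD"
    and \<alpha>: "\<alpha> \<in> ends VG EG" and \<alpha>': "\<alpha>' \<in> ends (cart_V VG VD) (cart_E EG ED)"
    and sub: "(\<lambda>r i. (r i, x0)) ` \<alpha> \<subseteq> \<alpha>'"
    and R': "R' \<in> disjoint_rays \<alpha>'" and big: "k * card VD < card R'"
  shows "\<exists>R\<in>disjoint_rays \<alpha>. card R = Suc k"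
proof -
  have R'': "finite R'" "R' \<subseteq> \<alpha>'" "disjoint_family_on range R'"
    using R' unfolding disjoint_rays_def by auto
  have rays: "ray (cart_V VG VD) (cart_E EG ED) r" if "r \<in> R'" for r
    using end_rays[OF \<alpha>'] R''(2) that by blast
  let ?H = "trace_graph EG R'" and ?A = "(\<lambda>r. fst (r 0)) ` R'"
  have "\<forall>j. \<exists>P. (\<forall>t<Suc k. is_path ?H (P t) \<and> hd (P t) \<in> ?A \<and> \<not> set (P t) \<subseteq> reach ?H ?A j) \<and>
      (\<forall>t<Suc k. \<forall>t'<Suc k. t \<noteq> t' \<longrightarrow> set (P t) \<inter> set (P t') = {})"
    using trace_graph_exit_paths[OF G(1) R''(1,3) rays G(3) big] by blast
  from choice[OF this] obtain P where P:
    "\<forall>j. (\<forall>t<Suc k. is_path ?H (P j t) \<and> hd (P j t) \<in> ?A \<and> \<not> set (P j t) \<subseteq> reach ?H ?A j) \<and>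
      (\<forall>t<Suc k. \<forall>t'<Suc k. t \<noteq> t' \<longrightarrow> set (P j t) \<inter> set (P j t') = {})"
    by blast
  have P1: "\<And>j t. t < Suc k \<Longrightarrow> is_path ?H (P j t) \<and> hd (P j t) \<in> ?A \<and> \<not> set (P j t) \<subseteq> reach ?H ?A j"
    and P2: "\<And>j t t'. t < Suc k \<Longrightarrow> t' < Suc k \<Longrightarrow> t \<noteq> t' \<Longrightarrow> set (P j t) \<inter> set (P j t') = {}"
    using P by blast+
  from disjoint_rays_from_exit_paths[OF finite_reach_trace_graph[OF R''(1) rays G(3)] P1 P2]
  obtain r where "(\<forall>t<Suc k. ray UNIV ?H (r t)) \<and>
    (\<forall>t<Suc k. \<forall>t'<Suc k. t \<noteq> t' \<longrightarrow> range (r t) \<inter> range (r t') = {})" ..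
  then have r: "\<And>t. t < Suc k \<Longrightarrow> ray UNIV ?H (r t)"
    "\<And>t t'. t < Suc k \<Longrightarrow> t' < Suc k \<Longrightarrow> t \<noteq> t' \<Longrightarrow> range (r t) \<inter> range (r t') = {}"
    by simp_all
  have "inj_on r {..<Suc k}"
  proof (rule inj_onI)
    fix t t' assume "t \<in> {..<Suc k}" "t' \<in> {..<Suc k}" "r t = r t'"
    then show "t = t'" using r(2)[of t t'] by (metis IntI lessThan_iff rangeI empty_iff)
  qed
  moreover have "r t \<in> \<alpha>" if "t < Suc k" for t
    using trace_ray_in_end[OF G \<alpha> \<alpha>' sub R''(1,2) r(1)[OF that]] .
  then have "r ` {..<Suc k} \<subseteq> \<alpha>" by auto
  moreover have "disjoint_family_on range (r ` {..<Suc k})"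
    unfolding disjoint_family_on_def using r(2) by auto
  ultimately show ?thesis unfolding disjoint_rays_def
    by (intro bexI[of _ "r ` {..<Suc k}"]) (auto simp: card_image)
qed

lemma SUP_card_scale:
  fixes X :: "'a set set" and Y :: "'b set set"
  assumes "0 < n"
    and lower: "\<And>R. R \<in> X \<Longrightarrow> \<exists>R'\<in>Y. card R' = card R * n"
    and upper: "\<And>R' k. R' \<in> Y \<Longrightarrow> k * n < card R' \<Longrightarrow> \<exists>R\<in>X. card R = Suc k"
  shows "(SUP R'\<in>Y. enat (card R')) = (SUP R\<in>X. enat (card R)) * enat n"
proof -
  let ?dX = "SUP R\<in>X. enat (card R)" and ?dY = "SUP R'\<in>Y. enat (card R')"
  have dY_ge: "enat (card R * n) \<le> ?dY" if "R \<in> X" for R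
    using lower[OF that] by (metis SUP_upper)
  have dY_le: "?dY \<le> enat (m * n)" if "\<forall>R\<in>X. card R \<le> m" for m
  proof (rule SUP_least)
    fix R' assume "R' \<in> Y"
    show "enat (card R') \<le> enat (m * n)"
      using upper[OF \<open>R' \<in> Y\<close>, of m] that by force
  qed
  show ?thesis
  proof (cases ?dX)
    case (enat m)
    then have bounded: "\<forall>R\<in>X. card R \<le> m" by (metis SUP_upper enat_ord_simps(1))
    have "enat (m * n) \<le> ?dY"
    proof (cases "m = 0")
      case False
      have "\<exists>R\<in>X. m \<le> card R"
      proof (rule ccontr)
        assume "\<not> ?thesis"
        then have "?dX \<le> enat (m - 1)" by (intro SUP_least) (auto simp: not_le)
        with enat False show False by simp
      qed
      with bounded show ?thesis using dY_ge le_antisym by metis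
    qed (simp add: zero_enat_def[symmetric])
    with dY_le[OF bounded] enat show ?thesis by simp
  next
    case infinity
    have "?dY = \<infinity>"
    proof (rule ccontr)
      assume "?dY \<noteq> \<infinity>"
      then obtain p where p: "?dY = enat p" by auto
      have "card R \<le> p" if "R \<in> X" for R
      proof -
        have "card R * n \<le> p" using dY_ge[OF that] p by simp
        moreover have "card R \<le> card R * n" using \<open>0 < n\<close> by simp
        ultimately show ?thesis by linarith
      qed
      then have "?dX \<le> enat p" by (intro SUP_least) simp
      with infinity show False by simp
    qed
    with infinity \<open>0 < n\<close> show ?thesis by simp
  qed
qed

theorem lemma19:
  fixes VG :: "'a set" and EG :: "'a \<Rightarrow> 'a \<Rightarrow> bool"
    and VD :: "'b set" and ED :: "'b \<Rightarrow> 'b \<Rightarrow> bool"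
    and x0 :: 'b and \<alpha> :: "(nat \<Rightarrow> 'a) set" and \<alpha>' :: "(nat \<Rightarrow> 'a \<times> 'b) set"
  assumes "graph VG EG" and "infinite VG" and "locally_finite VG EG"
    and "graph VD ED" and "finite VD" and "connected_graph VD ED"
    and "x0 \<in> VD"
    and "\<alpha> \<in> ends VG EG"
    and "\<alpha>' \<in> ends (cart_V VG VD) (cart_E EG ED)"
    and "(\<lambda>r i. (r i, x0)) ` \<alpha> \<subseteq> \<alpha>'"
  shows "end_degree \<alpha>' = end_degree \<alpha> * enat (card VD)"
  unfolding end_degree_eq_SUP
proof (rule SUP_card_scale)
  show "0 < card VD" using assms(5,7) card_gt_0_iff by blast
  show "\<exists>R'\<in>disjoint_rays \<alpha>'. card R' = card R * card VD" if "R \<in> disjoint_rays \<alpha>" for R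
    using disjoint_rays_lift[OF assms(1,4,6,5,7-10) that] .
  show "\<exists>R\<in>disjoint_rays \<alpha>. card R = Suc k"
    if "R' \<in> disjoint_rays \<alpha>'" "k * card VD < card R'" for R' k
    using disjoint_rays_project[OF assms(1,4,5,8-10) that] .
qed

end
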